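(* Suppose $y$ is the peak blue entry of a $321$-containing avoider $p$. Then (i) $p\,\backslash\,\{y\}$ is again an avoider, (ii) the blue entries of $p$ other than $y$ become the blue entries of $p\,\backslash\,\{y\}$, and (iii) $y$ is in the peak-insertion set of $p\,\backslash\,\{y\}$.
   Context: Permutations are standard permutations written in one-line form. A permutation on $[n]$ is indecomposable if there is no $k$ with $1\le k<n$ such that its first $k$ entries are exactly $\{1,\dots,k\}$ (the empty permutation is not indecomposable). An "avoider" means an indecomposable permutation avoiding both patterns $3241$ and $4321$. A blue (key-2) entry of an avoider is an entry that serves as the "2" in a $321$ pattern or in a $4312$ pattern. For a $321$-containing avoider, let $a$ be the last (rightmost) entry serving as the "1" of a $321$ pattern; the peak blue entry is the larger of $a$ and its immediate predecessor. Deleting an entry $y$ from a permutation $p$ on $[n]$, written $p\,\backslash\,\{y\}$, means erasing $y$ and subtracting $1$ from each entry $>y$. LRMax means left-to-right maximum. To a $321$-containing permutation $p$ on $[n]$ associate the triple $(a,b,c)$: $a$ is the last "1" of a $321$ in $p$, $b$ is the rightmost entry to the left of $a$ that exceeds $a$, and $c$ is the first non-LRMax entry after $a$ ($c=\infty$ if there is none). Its peak-insertion set is $[a+1,b+1]\cup[c+1,n]$, where $[c+1,n]=\emptyset$ if $c=\infty$. For a $321$-avoiding permutation on $[n]$, set $c=1$ and define its peak-insertion set to be $[2,n]$. *)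

theory Defs
  imports Main
begin

text \<open>Permutations of [n] in one-line form are lists of naturals; positions are 0-indexed.\<close>

definition is_perm :: "nat list \<Rightarrow> bool" where
  "is_perm p \<longleftrightarrow> distinct p \<and> set p = {1..length p}"

definition indecomposable :: "nat list \<Rightarrow> bool" where
  "indecomposable p \<longleftrightarrow> p \<noteq> [] \<and>
     (\<forall>k. 1 \<le> k \<and> k < length p \<longrightarrow> set (take k p) \<noteq> {1..k})"

definition occ :: "nat list \<Rightarrow> nat list \<Rightarrow> nat list \<Rightarrow> bool" where
  "occ p pat idx \<longleftrightarrow> length idx = length pat \<and> sorted_wrt (<) idx \<and>
     (\<forall>i\<in>set idx. i < length p) \<and>
     (\<forall>i<length pat. \<forall>j<length pat. (p ! (idx ! i) < p ! (idx ! j)) \<longleftrightarrow> (pat ! i < pat ! j))"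

definition contains :: "nat list \<Rightarrow> nat list \<Rightarrow> bool" where
  "contains p pat \<longleftrightarrow> (\<exists>idx. occ p pat idx)"

definition avoider :: "nat list \<Rightarrow> bool" where
  "avoider p \<longleftrightarrow> is_perm p \<and> indecomposable p \<and>
     \<not> contains p [3,2,4,1] \<and> \<not> contains p [4,3,2,1]"

definition serves :: "nat list \<Rightarrow> nat list \<Rightarrow> nat \<Rightarrow> nat \<Rightarrow> bool" where
  "serves p pat r j \<longleftrightarrow> (\<exists>idx k. occ p pat idx \<and> k < length pat \<and> pat ! k = r \<and> idx ! k = j)"

definition blue :: "nat list \<Rightarrow> nat set" where
  "blue p = {p ! j | j. j < length p \<and> (serves p [3,2,1] 2 j \<or> serves p [4,3,1,2] 2 j)}"

definition last1pos :: "nat list \<Rightarrow> nat" where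
  "last1pos p = Max {j. serves p [3,2,1] 1 j}"

definition peak_blue :: "nat list \<Rightarrow> nat" where
  "peak_blue p = max (p ! last1pos p) (p ! (last1pos p - 1))"

definition del_entry :: "nat list \<Rightarrow> nat \<Rightarrow> nat list" where
  "del_entry p y = map (\<lambda>x. if y < x then x - 1 else x) (removeAll y p)"

definition is_lrmax :: "nat list \<Rightarrow> nat \<Rightarrow> bool" where
  "is_lrmax p i \<longleftrightarrow> (\<forall>k<i. p ! k < p ! i)"

definition peak_ins :: "nat list \<Rightarrow> nat set" where
  "peak_ins q =
    (if contains q [3,2,1] then
       (let j = last1pos q; a = q ! j;
            b = q ! Max {k. k < j \<and> a < q ! k};
            C = {k. j < k \<and> k < length q \<and> \<not> is_lrmax q k}
        in {a+1..b+1} \<union> (if C = {} then {} else {q ! Min C + 1..length q}))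
     else {2..length q})"

end

theory Submission
  imports Defs
begin

text \<open>
  Let j be the position of the last entry serving as the 1 of a 321, a = p(j) and e = p(j-1);
  the peak blue entry is e if e > a and a otherwise. Either way the deleted entry has a larger
  entry before it and a smaller neighbour, which keeps the permutation indecomposable, and
  deletion creates no new patterns. A 321 or 4312 witnessing blueness through the deleted
  entry can be rerouted through its neighbour or through the 321 ending at j, because no 321
  ends after j and p avoids 3241 and 4321; so blueness is transported. Finally the last 321-one
  of the reduced permutation sits at position j-1 or earlier, and the same forbidden patterns
  squeeze the deleted value into the corresponding interval of the peak-insertion set.
\<close>

lemma occ_321_iff:
  "occ p [3,2,1] [a,b,c] \<longleftrightarrow> a < b \<and> b < c \<and> c < length p \<and> p!b < p!a \<and> p!c < p!b"
  unfolding occ_def by (simp add: All_less_Suc numeral_eq_Suc) linarith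

lemma occ_4321_iff:
  "occ p [4,3,2,1] [a,b,c,d] \<longleftrightarrow>
     a < b \<and> b < c \<and> c < d \<and> d < length p \<and> p!b < p!a \<and> p!c < p!b \<and> p!d < p!c"
  unfolding occ_def by (simp add: All_less_Suc numeral_eq_Suc) linarith

lemma occ_3241_iff:
  "occ p [3,2,4,1] [a,b,c,d] \<longleftrightarrow>
     a < b \<and> b < c \<and> c < d \<and> d < length p \<and> p!b < p!a \<and> p!a < p!c \<and> p!d < p!b"
  unfolding occ_def by (simp add: All_less_Suc numeral_eq_Suc) linarith

lemma occ_4312_iff:
  "occ p [4,3,1,2] [a,b,c,d] \<longleftrightarrow>
     a < b \<and> b < c \<and> c < d \<and> d < length p \<and> p!b < p!a \<and> p!d < p!b \<and> p!c < p!d"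
  unfolding occ_def by (simp add: All_less_Suc numeral_eq_Suc) linarith

lemma occ_length: "occ p pat idx \<Longrightarrow> length idx = length pat"
  by (simp add: occ_def)

lemma ex_length_3: "(\<exists>xs. length xs = Suc (Suc (Suc 0)) \<and> P xs) \<longleftrightarrow> (\<exists>a b c. P [a,b,c])"
  by (auto simp: numeral_eq_Suc length_Suc_conv) (rule exI[of _ "[_,_,_]"], simp)

lemma ex_length_4:
  "(\<exists>xs. length xs = Suc (Suc (Suc (Suc 0))) \<and> P xs) \<longleftrightarrow> (\<exists>a b c d. P [a,b,c,d])"
  by (auto simp: numeral_eq_Suc length_Suc_conv) (rule exI[of _ "[_,_,_,_]"], simp)

lemma contains_iff_length:
  "contains p pat \<longleftrightarrow> (\<exists>idx. length idx = length pat \<and> occ p pat idx)"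
  unfolding contains_def using occ_length by blast

lemma serves_iff_length: "serves p pat r j \<longleftrightarrow>
    (\<exists>idx. length idx = length pat \<and> (\<exists>k<length pat. occ p pat idx \<and> pat!k = r \<and> idx!k = j))"
  unfolding serves_def using occ_length by blast

lemma contains_321_iff:
  "contains p [3,2,1] \<longleftrightarrow> (\<exists>a b c. a < b \<and> b < c \<and> c < length p \<and> p!b < p!a \<and> p!c < p!b)"
  unfolding contains_iff_length length_Cons list.size(3) ex_length_3 occ_321_iff ..

lemma contains_4321_iff:
  "contains p [4,3,2,1] \<longleftrightarrow>
     (\<exists>a b c d. a < b \<and> b < c \<and> c < d \<and> d < length p \<and> p!b < p!a \<and> p!c < p!b \<and> p!d < p!c)"
  unfolding contains_iff_length length_Cons list.size(3) ex_length_4 occ_4321_iff ..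

lemma contains_3241_iff:
  "contains p [3,2,4,1] \<longleftrightarrow>
     (\<exists>a b c d. a < b \<and> b < c \<and> c < d \<and> d < length p \<and> p!b < p!a \<and> p!a < p!c \<and> p!d < p!b)"
  unfolding contains_iff_length length_Cons list.size(3) ex_length_4 occ_3241_iff ..

lemma serves_321_one_iff:
  "serves p [3,2,1] 1 c \<longleftrightarrow> (\<exists>a b. a < b \<and> b < c \<and> c < length p \<and> p!b < p!a \<and> p!c < p!b)"
  unfolding serves_iff_length length_Cons list.size(3) ex_length_3 occ_321_iff
  by (auto simp: Ex_less_Suc)

lemma serves_321_two_iff:
  "serves p [3,2,1] 2 b \<longleftrightarrow> (\<exists>a c. a < b \<and> b < c \<and> c < length p \<and> p!b < p!a \<and> p!c < p!b)"
  unfolding serves_iff_length length_Cons list.size(3) ex_length_3 occ_321_iff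
  by (auto simp: Ex_less_Suc)

lemma serves_4312_two_iff:
  "serves p [4,3,1,2] 2 d \<longleftrightarrow>
     (\<exists>a b c. a < b \<and> b < c \<and> c < d \<and> d < length p \<and> p!b < p!a \<and> p!d < p!b \<and> p!c < p!d)"
  unfolding serves_iff_length length_Cons list.size(3) ex_length_4 occ_4312_iff
  by (auto simp: Ex_less_Suc)

lemma finite_serves: "finite {t. serves p pat r t}"
proof (rule finite_subset)
  show "{t. serves p pat r t} \<subseteq> {..<length p}"
    unfolding serves_def occ_def by (auto dest: nth_mem)
qed simp

lemma serves_le_last1pos: "serves p [3,2,1] 1 t \<Longrightarrow> t \<le> last1pos p"
  unfolding last1pos_def using finite_serves by (rule Max_ge) simp

lemma serves_last1pos:
  assumes "contains p [3,2,1]" shows "serves p [3,2,1] 1 (last1pos p)"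
proof -
  from assms obtain t where "serves p [3,2,1] 1 t"
    unfolding contains_321_iff serves_321_one_iff by blast
  then show ?thesis unfolding last1pos_def using Max_in[OF finite_serves] by auto
qed

section \<open>Deleting an entry\<close>

lemma nth_in_set_take_iff:
  assumes "distinct xs" and "i < length xs"
  shows "xs ! i \<in> set (take l xs) \<longleftrightarrow> i < l"
proof
  assume "xs ! i \<in> set (take l xs)"
  then obtain i' where "i' < min l (length xs)" "take l xs ! i' = xs ! i" by (auto simp: in_set_conv_nth)
  with assms show "i < l" using nth_eq_iff_index_eq by fastforce
next
  assume "i < l"
  with assms(2) show "xs ! i \<in> set (take l xs)"
    by (metis in_set_conv_nth length_take min_less_iff_conj nth_take)
qed

lemma removeAll_nth_distinct:
  assumes "distinct p" and "m < length p"
  shows "removeAll (p!m) p = take m p @ drop (Suc m) p"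
proof -
  have p: "p = take m p @ p!m # drop (Suc m) p" using assms(2) by (simp add: id_take_nth_drop)
  with assms(1) have "distinct (take m p @ p!m # drop (Suc m) p)" by simp
  then have "p!m \<notin> set (take m p)" "p!m \<notin> set (drop (Suc m) p)" by auto
  then show ?thesis by (subst p) (simp add: removeAll_id)
qed

definition lower_above :: "nat \<Rightarrow> nat \<Rightarrow> nat" where
  "lower_above y x = (if y < x then x - 1 else x)"

lemma lower_above_less_iff:
  "u \<noteq> y \<Longrightarrow> v \<noteq> y \<Longrightarrow> lower_above y u < lower_above y v \<longleftrightarrow> u < v"
  unfolding lower_above_def by auto

lemma inj_on_lower_above: "inj_on (lower_above y) (- {y})"
  unfolding inj_on_def lower_above_def by auto

lemma lower_above_preimage_atLeastAtMost:
  assumes image: "lower_above y ` B = {1..k}" and "y \<notin> B" and "1 \<le> y"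
  shows "B = (if y \<le> Suc k then {1..Suc k} - {y} else {1..k})"
proof -
  have "B = {x. x \<noteq> y \<and> lower_above y x \<in> {1..k}}"
  proof
    show "B \<subseteq> {x. x \<noteq> y \<and> lower_above y x \<in> {1..k}}" using image \<open>y \<notin> B\<close> by auto
    show "{x. x \<noteq> y \<and> lower_above y x \<in> {1..k}} \<subseteq> B"
    proof
      fix x assume x: "x \<in> {x. x \<noteq> y \<and> lower_above y x \<in> {1..k}}"
      then have "lower_above y x \<in> lower_above y ` B" using image by simp
      then obtain b where "b \<in> B" "lower_above y b = lower_above y x" by force
      with x \<open>y \<notin> B\<close> show "x \<in> B"
        by (auto dest: inj_onD[OF inj_on_lower_above])
    qed
  qed
  also have "\<dots> = (if y \<le> Suc k then {1..Suc k} - {y} else {1..k})"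
    using \<open>1 \<le> y\<close> unfolding lower_above_def by (auto split: if_splits)
  finally show ?thesis .
qed

lemma lower_above_image_atLeastAtMost_minus:
  assumes "y \<in> {1..n}"
  shows "lower_above y ` ({1..n} - {y}) = {1..n - 1}"
proof
  show "lower_above y ` ({1..n} - {y}) \<subseteq> {1..n - 1}"
    using assms unfolding lower_above_def by auto
  show "{1..n - 1} \<subseteq> lower_above y ` ({1..n} - {y})"
  proof
    fix x assume x: "x \<in> {1..n - 1}"
    show "x \<in> lower_above y ` ({1..n} - {y})"
    proof (cases "x < y")
      case True
      then have "x = lower_above y x" "x \<in> {1..n} - {y}" using x unfolding lower_above_def by auto
      then show ?thesis by blast
    next
      case False
      then have "x = lower_above y (Suc x)" "Suc x \<in> {1..n} - {y}" using x unfolding lower_above_def by auto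
      then show ?thesis by blast
    qed
  qed
qed

lemma del_entry_eq_map: "del_entry p y = map (lower_above y) (removeAll y p)"
  unfolding del_entry_def lower_above_def ..

locale entry_deletion =
  fixes p :: "nat list" and m :: nat
  assumes distinct_p: "distinct p" and m_less: "m < length p"
begin

abbreviation y :: nat where "y \<equiv> p ! m"
abbreviation q :: "nat list" where "q \<equiv> del_entry p y"

definition pos_up :: "nat \<Rightarrow> nat" where "pos_up i = (if i < m then i else Suc i)"

definition pos_down :: "nat \<Rightarrow> nat" where "pos_down r = (if r < m then r else r - 1)"

lemma q_eq: "q = map (lower_above y) (take m p @ drop (Suc m) p)"
  unfolding del_entry_eq_map using removeAll_nth_distinct[OF distinct_p m_less] by simp

lemma length_q: "length q = length p - 1"
  unfolding q_eq using m_less by simp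

lemma nth_q: "i < length q \<Longrightarrow> q ! i = lower_above y (p ! pos_up i)"
  unfolding q_eq pos_up_def using m_less by (auto simp: nth_append min_def)

lemma pos_up_less: "i < length q \<Longrightarrow> pos_up i < length p"
  using length_q unfolding pos_up_def by auto

lemma pos_up_neq: "pos_up i \<noteq> m"
  unfolding pos_up_def by auto

lemma pos_up_less_iff: "pos_up i < pos_up i' \<longleftrightarrow> i < i'"
  unfolding pos_up_def by auto

lemma pos_down_less: "r < length p \<Longrightarrow> r \<noteq> m \<Longrightarrow> pos_down r < length q"
  using length_q m_less unfolding pos_down_def by auto

lemma pos_up_pos_down: "r \<noteq> m \<Longrightarrow> pos_up (pos_down r) = r"
  unfolding pos_up_def pos_down_def by auto

lemma pos_down_less_iff: "r \<noteq> m \<Longrightarrow> r' \<noteq> m \<Longrightarrow> pos_down r < pos_down r' \<longleftrightarrow> r < r'"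
  by (metis pos_up_less_iff pos_up_pos_down)

lemma nth_neq_y: "r < length p \<Longrightarrow> r \<noteq> m \<Longrightarrow> p ! r \<noteq> y"
  using distinct_p m_less nth_eq_iff_index_eq by blast

lemma nth_q_pos_down: "r < length p \<Longrightarrow> r \<noteq> m \<Longrightarrow> q ! pos_down r = lower_above y (p ! r)"
  using nth_q[OF pos_down_less] pos_up_pos_down by simp

lemma nth_q_less_iff:
  "i < length q \<Longrightarrow> i' < length q \<Longrightarrow> q ! i < q ! i' \<longleftrightarrow> p ! pos_up i < p ! pos_up i'"
  using nth_q lower_above_less_iff nth_neq_y pos_up_less pos_up_neq by simp

lemma occ_pos_up: assumes "occ q pat idx" shows "occ p pat (map pos_up idx)"
proof -
  from assms have len: "length idx = length pat" and sorted: "sorted_wrt (<) idx"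
    and bound: "\<forall>i\<in>set idx. i < length q"
    and order: "\<forall>i<length pat. \<forall>j<length pat. q ! (idx ! i) < q ! (idx ! j) \<longleftrightarrow> pat ! i < pat ! j"
    unfolding occ_def by auto
  have "p ! pos_up (idx ! i) < p ! pos_up (idx ! j) \<longleftrightarrow> pat ! i < pat ! j"
    if "i < length pat" "j < length pat" for i j
    using that order len bound nth_q_less_iff by (metis nth_mem)
  with len sorted bound show ?thesis
    unfolding occ_def by (simp add: sorted_wrt_map pos_up_less_iff pos_up_less)
qed

lemma contains_q: "contains q pat \<Longrightarrow> contains p pat"
  unfolding contains_def using occ_pos_up by blast

lemma serves_pos_up: "serves q pat r s \<Longrightarrow> serves p pat r (pos_up s)"
  unfolding serves_def by (metis occ_pos_up occ_length nth_map)

lemma is_perm_q: assumes "is_perm p" shows "is_perm q"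
proof -
  have set_p: "set p = {1..length p}" using assms unfolding is_perm_def by simp
  then have "y \<in> {1..length p}" using m_less nth_mem by blast
  have "set q = lower_above y ` ({1..length p} - {y})"
    unfolding del_entry_eq_map set_p [symmetric] by simp
  also have "\<dots> = {1..length q}"
    using lower_above_image_atLeastAtMost_minus[OF \<open>y \<in> {1..length p}\<close>] length_q by simp
  finally have "set q = {1..length q}" .
  moreover have "inj_on (lower_above y) (set (removeAll y p))"
    by (rule inj_on_subset[OF inj_on_lower_above]) auto
  then have "distinct q"
    unfolding del_entry_eq_map using distinct_p by (simp add: distinct_map distinct_removeAll)
  ultimately show ?thesis unfolding is_perm_def by simp
qed

lemma set_take_q_before: "k < m \<Longrightarrow> set (take k q) = lower_above y ` set (take k p)"
  unfolding q_eq by (simp add: take_map min_def)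

lemma set_take_q_after:
  assumes "m \<le> k"
  shows "set (take k q) = lower_above y ` (set (take (Suc k) p) - {y})"
proof -
  have p: "p = take m p @ y # drop (Suc m) p"
    using m_less by (simp add: id_take_nth_drop)
  have "take (Suc k) (take m p @ y # drop (Suc m) p) = take m p @ y # take (k - m) (drop (Suc m) p)"
    using assms m_less by (simp add: Suc_diff_le)
  with p have "take (Suc k) p = take m p @ y # take (k - m) (drop (Suc m) p)" by simp
  moreover have "distinct (take m p @ y # drop (Suc m) p)"
    using distinct_p p by simp
  then have "y \<notin> set (take m p)" "y \<notin> set (drop (Suc m) p)" by auto
  moreover have "take k q = map (lower_above y) (take m p @ take (k - m) (drop (Suc m) p))"
    unfolding q_eq using assms m_less by (simp add: take_map)
  ultimately show ?thesis by (auto dest: in_set_takeD)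
qed

lemma indecomposable_q:
  assumes perm: "is_perm p" and indec: "indecomposable p"
    and larger_before: "z < m" "y < p ! z"
    and smaller_adjacent: "r < length p" "r \<noteq> m" "m \<le> Suc r" "p ! r < y"
  shows "indecomposable q"
proof -
  have set_p: "set p = {1..length p}" using perm unfolding is_perm_def by simp
  then have y_pos: "1 \<le> y" using m_less nth_mem by fastforce
  have prefix_p: "set (take l p) \<noteq> {1..l}" if "1 \<le> l" "l < length p" for l
    using indec that unfolding indecomposable_def by blast
  have take_iff: "p ! i \<in> set (take l p) \<longleftrightarrow> i < l" if "i < length p" for i l
    using nth_in_set_take_iff[OF distinct_p that] .
  have "set (take k q) \<noteq> {1..k}" if k: "1 \<le> k" "k < length q" for k
  proof
    assume prefix: "set (take k q) = {1..k}"
    show False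
    proof (cases "m \<le> k")
      case True
      let ?B = "set (take (Suc k) p) - {y}"
      have B: "?B = (if y \<le> Suc k then {1..Suc k} - {y} else {1..k})"
        using lower_above_preimage_atLeastAtMost prefix set_take_q_after[OF True] y_pos by simp
      have "p ! z \<in> ?B"
        using larger_before True m_less take_iff nth_neq_y by simp
      then have "y \<le> Suc k" using B larger_before by (auto split: if_splits)
      then have "?B = {1..Suc k} - {y}" using B by simp
      moreover have "y \<in> set (take (Suc k) p)" using True m_less take_iff by simp
      ultimately have "set (take (Suc k) p) = insert y ({1..Suc k} - {y})" by blast
      also have "\<dots> = {1..Suc k}" using y_pos \<open>y \<le> Suc k\<close> by auto
      finally have "set (take (Suc k) p) = {1..Suc k}" .
      moreover have "Suc k < length p" using k length_q by simp
      ultimately show False using prefix_p[of "Suc k"] by simp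
    next
      case False
      have "y \<notin> set (take k p)" using False m_less take_iff by simp
      then have B: "set (take k p) = (if y \<le> Suc k then {1..Suc k} - {y} else {1..k})"
        using lower_above_preimage_atLeastAtMost prefix set_take_q_before False y_pos by simp
      show False
      proof (cases "y \<le> Suc k")
        case True
        have "p ! r \<in> {1..length p}" using set_p smaller_adjacent(1) nth_mem by blast
        then have "p ! r \<in> set (take k p)" using B True smaller_adjacent by auto
        then show False using take_iff False smaller_adjacent by simp
      next
        case False
        then show False using B prefix_p k length_q by simp
      qed
    qed
  qed
  moreover have "q \<noteq> []" using length_q larger_before m_less by auto
  ultimately show ?thesis unfolding indecomposable_def by blast
qed

lemma avoider_q:
  assumes "avoider p"
    and "z < m" "y < p ! z"
    and "r < length p" "r \<noteq> m" "m \<le> Suc r" "p ! r < y"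
  shows "avoider q"
  using assms is_perm_q indecomposable_q contains_q unfolding avoider_def by blast

lemma last1pos_q_less:
  assumes "contains q [3,2,1]" and "m \<le> last1pos p"
  shows "last1pos q < last1pos p"
proof -
  have "pos_up (last1pos q) \<le> last1pos p"
    using serves_le_last1pos serves_pos_up serves_last1pos[OF assms(1)] by blast
  with assms(2) show ?thesis unfolding pos_up_def by (auto split: if_splits)
qed

lemma nth_q_pos_down_less_iff:
  "r < length p \<Longrightarrow> r \<noteq> m \<Longrightarrow> r' < length p \<Longrightarrow> r' \<noteq> m \<Longrightarrow>
    q ! pos_down r < q ! pos_down r' \<longleftrightarrow> p ! r < p ! r'"
  using nth_q_pos_down lower_above_less_iff nth_neq_y by simp

definition stays_blue :: "nat \<Rightarrow> bool" where
  "stays_blue t \<longleftrightarrow>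
     (\<exists>a c. a < t \<and> t < c \<and> c < length p \<and> m \<notin> {a, c} \<and> p!t < p!a \<and> p!c < p!t) \<or>
     (\<exists>a b c. a < b \<and> b < c \<and> c < t \<and> t < length p \<and> m \<notin> {a, b, c} \<and>
        p!b < p!a \<and> p!t < p!b \<and> p!c < p!t)"

lemma serves_q_pos_down:
  assumes "stays_blue t" and "t \<noteq> m" and "t < length p"
  shows "serves q [3,2,1] 2 (pos_down t) \<or> serves q [4,3,1,2] 2 (pos_down t)"
  using assms(1) unfolding stays_blue_def
proof (elim disjE exE conjE)
  fix a c assume "a < t" "t < c" "c < length p" "m \<notin> {a, c}" "p!t < p!a" "p!c < p!t"
  with assms(2,3) have "serves q [3,2,1] 2 (pos_down t)"
    unfolding serves_321_two_iff
    by (intro exI[of _ "pos_down a"] exI[of _ "pos_down c"])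
      (simp add: pos_down_less_iff nth_q_pos_down_less_iff pos_down_less)
  then show ?thesis ..
next
  fix a b c assume "a < b" "b < c" "c < t" "t < length p" "m \<notin> {a, b, c}"
    "p!b < p!a" "p!t < p!b" "p!c < p!t"
  with assms(2) have "serves q [4,3,1,2] 2 (pos_down t)"
    unfolding serves_4312_two_iff
    by (intro exI[of _ "pos_down a"] exI[of _ "pos_down b"] exI[of _ "pos_down c"])
      (simp add: pos_down_less_iff nth_q_pos_down_less_iff pos_down_less)
  then show ?thesis ..
qed

lemma blue_q:
  assumes "\<And>t. t < length p \<Longrightarrow> t \<noteq> m \<Longrightarrow>
    serves p [3,2,1] 2 t \<or> serves p [4,3,1,2] 2 t \<Longrightarrow> stays_blue t"
  shows "lower_above y ` (blue p - {y}) = blue q"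
proof
  show "lower_above y ` (blue p - {y}) \<subseteq> blue q"
  proof
    fix x assume "x \<in> lower_above y ` (blue p - {y})"
    then obtain t where t: "t < length p" "p ! t \<noteq> y" "x = lower_above y (p ! t)"
      "serves p [3,2,1] 2 t \<or> serves p [4,3,1,2] 2 t"
      unfolding blue_def by blast
    then have "t \<noteq> m" by blast
    with t have "serves q [3,2,1] 2 (pos_down t) \<or> serves q [4,3,1,2] 2 (pos_down t)"
      using assms serves_q_pos_down by blast
    moreover have "pos_down t < length q" "q ! pos_down t = x"
      using t \<open>t \<noteq> m\<close> pos_down_less nth_q_pos_down by auto
    ultimately show "x \<in> blue q" unfolding blue_def by blast
  qed
  show "blue q \<subseteq> lower_above y ` (blue p - {y})"
  proof
    fix x assume "x \<in> blue q"
    then obtain s where s: "s < length q" "x = q ! s"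
      "serves q [3,2,1] 2 s \<or> serves q [4,3,1,2] 2 s"
      unfolding blue_def by blast
    then have "p ! pos_up s \<in> blue p"
      unfolding blue_def using serves_pos_up pos_up_less by blast
    moreover have "p ! pos_up s \<noteq> y" "x = lower_above y (p ! pos_up s)"
      using s nth_neq_y pos_up_less pos_up_neq nth_q by auto
    ultimately show "x \<in> lower_above y ` (blue p - {y})" by blast
  qed
qed

end

section \<open>The entries around the last 321-one of an avoider\<close>

lemma peak_ins_321_freeI:
  "\<not> contains q [3,2,1] \<Longrightarrow> 2 \<le> x \<Longrightarrow> x \<le> length q \<Longrightarrow> x \<in> peak_ins q"
  unfolding peak_ins_def by simp

lemma peak_ins_leftI:
  assumes "contains q [3,2,1]" and "q ! last1pos q < x"
    and "x \<le> q ! Max {k. k < last1pos q \<and> q ! last1pos q < q ! k} + 1"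
  shows "x \<in> peak_ins q"
  using assms unfolding peak_ins_def Let_def by auto

lemma peak_ins_rightI:
  assumes "contains q [3,2,1]"
    and "c \<in> C" and "q ! Min C < x" and "x \<le> length q"
    and "C = {k. last1pos q < k \<and> k < length q \<and> \<not> is_lrmax q k}"
  shows "x \<in> peak_ins q"
  using assms unfolding peak_ins_def Let_def by auto

locale last_321 =
  fixes p :: "nat list"
  assumes avoider: "avoider p" and contains_321: "contains p [3,2,1]"
begin

abbreviation j :: nat where "j \<equiv> last1pos p"

lemma distinct: "distinct p" and set_p: "set p = {1..length p}"
  using avoider unfolding avoider_def is_perm_def by auto

lemma nth_inj: "i < length p \<Longrightarrow> i' < length p \<Longrightarrow> p ! i = p ! i' \<Longrightarrow> i = i'"
  using distinct nth_eq_iff_index_eq by blast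

lemma nth_bounds: "i < length p \<Longrightarrow> 1 \<le> p ! i \<and> p ! i \<le> length p"
  using set_p nth_mem by fastforce

lemma no_3241:
  "a < b \<Longrightarrow> b < c \<Longrightarrow> c < d \<Longrightarrow> d < length p \<Longrightarrow>
    p!b < p!a \<Longrightarrow> p!a < p!c \<Longrightarrow> p!d < p!b \<Longrightarrow> False"
  using avoider unfolding avoider_def contains_3241_iff by blast

lemma no_4321:
  "a < b \<Longrightarrow> b < c \<Longrightarrow> c < d \<Longrightarrow> d < length p \<Longrightarrow>
    p!b < p!a \<Longrightarrow> p!c < p!b \<Longrightarrow> p!d < p!c \<Longrightarrow> False"
  using avoider unfolding avoider_def contains_4321_iff by blast

lemma no_321_ending_after_j:
  "j < c \<Longrightarrow> c < length p \<Longrightarrow> a < b \<Longrightarrow> b < c \<Longrightarrow>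
    p!b < p!a \<Longrightarrow> p!c < p!b \<Longrightarrow> False"
  using serves_le_last1pos[of p c] unfolding serves_321_one_iff by force

lemma obtain_321_ending_at_j:
  obtains a b where "a < b" "b < j" "j < length p" "p!b < p!a" "p!j < p!b"
  using serves_last1pos[OF contains_321] unfolding serves_321_one_iff by blast

lemma j_bounds: "1 \<le> j" "j < length p"
  using obtain_321_ending_at_j by (metis less_one not_less not_less_zero)+

lemma prev_less: "j - 1 < length p"
  using j_bounds by simp

lemma nth_j_neq_prev: "p ! (j - 1) \<noteq> p ! j"
proof
  assume "p ! (j - 1) = p ! j"
  then have "j - 1 = j" using nth_inj j_bounds by simp
  then show False using j_bounds by simp
qed

sublocale del_prev: entry_deletion p "j - 1"
  using distinct j_bounds by unfold_locales auto

sublocale del_j: entry_deletion p j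
  using distinct j_bounds by unfold_locales auto

subsection \<open>Deleting p(j-1) when p(j-1) > p(j)\<close>

lemma descent_witness:
  assumes descent: "p ! j < p ! (j - 1)"
  obtains w where "w < j - 1" "p ! (j - 1) < p ! w"
proof -
  obtain a b where ab: "a < b" "b < j" "j < length p" "p!b < p!a" "p!j < p!b"
    by (rule obtain_321_ending_at_j)
  have "a < j - 1" using ab by linarith
  moreover have "p ! (j - 1) < p ! a"
  proof (cases "b = j - 1")
    case True
    then show ?thesis using ab by simp
  next
    case False
    then have "b < j - 1" using ab by linarith
    moreover have "p ! a \<noteq> p ! (j - 1)" using nth_inj[of a "j - 1"] ab \<open>a < j - 1\<close> by force
    ultimately show ?thesis using no_3241[of a b "j - 1" j] ab descent by fastforce
  qed
  ultimately show ?thesis using that by blast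
qed

lemma avoider_del_descent:
  assumes "p ! j < p ! (j - 1)"
  shows "avoider (del_entry p (p ! (j - 1)))"
proof -
  obtain w where "w < j - 1" "p ! (j - 1) < p ! w" using descent_witness assms .
  then show ?thesis using del_prev.avoider_q[OF avoider, of w j] assms j_bounds by simp
qed

lemma stays_blue_descent_321:
  assumes descent: "p ! j < p ! (j - 1)" and "serves p [3,2,1] 2 t"
  shows "del_prev.stays_blue t"
proof -
  obtain a c where 321: "a < t" "t < c" "c < length p" "p!t < p!a" "p!c < p!t"
    using assms(2) unfolding serves_321_two_iff by blast
  obtain w where w: "w < j - 1" "p ! (j - 1) < p ! w" using descent_witness descent .
  consider "a = j - 1" | "c = j - 1" | "j - 1 \<notin> {a, c}" by blast
  then show ?thesis
  proof cases
    case 1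
    with 321 w show ?thesis
      unfolding del_prev.stays_blue_def by (intro disjI1 exI[of _ w] exI[of _ c]) auto
  next
    case 2
    with 321 descent j_bounds show ?thesis
      unfolding del_prev.stays_blue_def by (intro disjI1 exI[of _ a] exI[of _ j]) auto
  next
    case 3
    with 321 show ?thesis
      unfolding del_prev.stays_blue_def by blast
  qed
qed

lemma stays_blue_descent_4312:
  assumes descent: "p ! j < p ! (j - 1)" and "serves p [4,3,1,2] 2 t"
  shows "del_prev.stays_blue t"
proof -
  obtain a b c where 4312: "a < b" "b < c" "c < t" "t < length p"
    "p!b < p!a" "p!t < p!b" "p!c < p!t"
    using assms(2) unfolding serves_4312_two_iff by blast
  have "b < j - 1"
  proof (rule ccontr)
    assume "\<not> b < j - 1"
    then have "j \<le> c" using 4312 by linarith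
    then show False
      using no_321_ending_after_j[of c a b] no_321_ending_after_j[of t a b] 4312
      by (cases "c = j") auto
  qed
  show ?thesis
  proof (cases "c = j - 1")
    case True
    then have "p ! j < p ! t" using descent 4312 by simp
    then have "t \<noteq> j" by auto
    with True 4312 have "j < t" by linarith
    with True 4312 \<open>b < j - 1\<close> \<open>p ! j < p ! t\<close> show ?thesis
      unfolding del_prev.stays_blue_def by (intro disjI2 exI[of _ a] exI[of _ b] exI[of _ j]) auto
  next
    case False
    with 4312 \<open>b < j - 1\<close> show ?thesis
      unfolding del_prev.stays_blue_def by (intro disjI2 exI[of _ a] exI[of _ b] exI[of _ c]) auto
  qed
qed

lemma blue_del_descent:
  assumes "p ! j < p ! (j - 1)"
  shows "lower_above (p ! (j - 1)) ` (blue p - {p ! (j - 1)}) = blue (del_entry p (p ! (j - 1)))"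
  using stays_blue_descent_321[OF assms] stays_blue_descent_4312[OF assms]
  by (intro del_prev.blue_q) blast

lemma descent_q_nth_before:
  "k < j - 1 \<Longrightarrow> del_prev.q ! k = lower_above (p ! (j - 1)) (p ! k)"
  using del_prev.nth_q_pos_down[of k] j_bounds unfolding del_prev.pos_down_def by simp

lemma descent_q_nth_prev:
  assumes "p ! j < p ! (j - 1)"
  shows "del_prev.q ! (j - 1) = p ! j"
proof -
  have "j \<noteq> j - 1" "del_prev.pos_down j = j - 1"
    using j_bounds unfolding del_prev.pos_down_def by auto
  then show ?thesis
    using del_prev.nth_q_pos_down[of j] j_bounds assms unfolding lower_above_def by simp
qed

lemma descent_q_less_iff:
  "k < j - 1 \<Longrightarrow> k' < j - 1 \<Longrightarrow> del_prev.q ! k < del_prev.q ! k' \<longleftrightarrow> p ! k < p ! k'"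
  using descent_q_nth_before lower_above_less_iff del_prev.nth_neq_y j_bounds by simp

lemma descent_prev_le_Suc_rightmost_larger:
  assumes descent: "p ! j < p ! (j - 1)"
    and x: "x < j - 1" "p ! j < del_prev.q ! x"
    and rightmost: "\<And>k. k < j - 1 \<Longrightarrow> p ! j < del_prev.q ! k \<Longrightarrow> k \<le> x"
  shows "p ! (j - 1) \<le> del_prev.q ! x + 1"
proof (cases "p ! (j - 1) < p ! x")
  case True
  then show ?thesis using descent_q_nth_before[OF x(1)] unfolding lower_above_def by simp
next
  case False
  let ?e = "p ! (j - 1)"
  have "p ! x \<noteq> ?e" using del_prev.nth_neq_y x(1) j_bounds by simp
  with False have "p ! x < ?e" by simp
  then have qx: "del_prev.q ! x = p ! x"
    using descent_q_nth_before[OF x(1)] unfolding lower_above_def by simp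
  show ?thesis
  proof (rule ccontr)
    assume "\<not> ?e \<le> del_prev.q ! x + 1"
    \<comment> \<open>then the entry of value p(x) + 1 has no admissible position\<close>
    then have gap: "Suc (p ! x) < ?e" using qx by simp
    then have "Suc (p ! x) \<in> set p" using set_p nth_bounds[OF prev_less] by auto
    then obtain r where r: "r < length p" "p ! r = Suc (p ! x)" by (metis in_set_conv_nth)
    have "r \<noteq> x" "r \<noteq> j - 1" "r \<noteq> j" using r gap x(2) qx by auto
    then consider "r < x" | "x < r \<and> r < j - 1" | "j < r" using x(1) by linarith
    then show False
    proof cases
      case 1
      then show False using no_3241[of r x "j - 1" j] r gap x qx j_bounds by auto
    next
      case 2
      then have "p ! j < del_prev.q ! r" using descent_q_nth_before[of r] r gap x(2) qx
        unfolding lower_above_def by auto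
      then show False using rightmost[of r] 2 by auto
    next
      case 3
      obtain w where "w < j - 1" "?e < p ! w" using descent_witness descent .
      with 3 show False using no_321_ending_after_j[of r w "j - 1"] r gap by linarith
    qed
  qed
qed

lemma peak_ins_descent_at_prev:
  assumes descent: "p ! j < p ! (j - 1)"
    and contains: "contains del_prev.q [3,2,1]" and last: "last1pos del_prev.q = j - 1"
  shows "p ! (j - 1) \<in> peak_ins del_prev.q"
proof -
  let ?q = del_prev.q
  define K where "K = {k. k < j - 1 \<and> p ! j < ?q ! k}"
  have "finite K" unfolding K_def by simp
  moreover have "K \<noteq> {}"
    using serves_last1pos[OF contains] descent_q_nth_prev[OF descent]
    unfolding last serves_321_one_iff K_def by fastforce
  ultimately have "Max K \<in> K" by (rule Max_in)
  then have "Max K < j - 1" "p ! j < ?q ! Max K" unfolding K_def by auto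
  moreover have "k \<le> Max K" if "k < j - 1" "p ! j < ?q ! k" for k
    using Max_ge[OF \<open>finite K\<close>] that unfolding K_def by simp
  ultimately have "p ! (j - 1) \<le> ?q ! Max K + 1"
    using descent_prev_le_Suc_rightmost_larger[OF descent] by blast
  moreover have "?q ! last1pos ?q < p ! (j - 1)"
    using descent descent_q_nth_prev[OF descent] last by simp
  ultimately show ?thesis
    using peak_ins_leftI[OF contains] last descent_q_nth_prev[OF descent] unfolding K_def by simp
qed

lemma peak_ins_descent_before_prev:
  assumes descent: "p ! j < p ! (j - 1)"
    and contains: "contains del_prev.q [3,2,1]" and last: "last1pos del_prev.q < j - 1"
  shows "p ! (j - 1) \<in> peak_ins del_prev.q"
proof -
  let ?q = del_prev.q and ?e = "p ! (j - 1)"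
  obtain w where w: "w < j - 1" "?e < p ! w" using descent_witness descent .
  have q_prev: "?q ! (j - 1) = p ! j" using descent_q_nth_prev[OF descent] .
  have q_w: "?q ! w = p ! w - 1"
    using descent_q_nth_before[OF w(1)] w(2) unfolding lower_above_def by simp
  define C where "C = {k. last1pos ?q < k \<and> k < length ?q \<and> \<not> is_lrmax ?q k}"
  have "j - 1 < length ?q" using del_prev.length_q j_bounds by linarith
  moreover have "\<not> ?q ! w < ?q ! (j - 1)" using q_w q_prev w descent by linarith
  ultimately have prev_in_C: "j - 1 \<in> C" using last w unfolding C_def is_lrmax_def by auto
  have "finite C" unfolding C_def by simp
  have c: "Min C \<in> C" "Min C \<le> j - 1"
    using Min_in[OF \<open>finite C\<close>] Min_le[OF \<open>finite C\<close> prev_in_C] prev_in_C by auto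
  let ?c = "Min C"
  have "?q ! ?c < ?e"
  proof (cases "?c = j - 1")
    case True
    then show ?thesis using q_prev descent by simp
  next
    case False
    with c have c_less: "?c < j - 1" by simp
    obtain z where z: "z < ?c" "\<not> ?q ! z < ?q ! ?c"
      using c(1) unfolding C_def is_lrmax_def by auto
    have "p ! z \<noteq> p ! ?c" using nth_inj[of z ?c] z c_less prev_less by auto
    then have "p ! ?c < p ! z" using z descent_q_less_iff[of z ?c] c_less by simp
    show ?thesis
    proof (rule ccontr)
      assume "\<not> ?q ! ?c < ?e"
      moreover have "p ! ?c \<noteq> ?e" using del_prev.nth_neq_y c_less prev_less by simp
      ultimately have "?e < p ! ?c"
        using descent_q_nth_before[OF c_less] unfolding lower_above_def by (auto split: if_splits)
      then show False
        using no_4321[of z ?c "j - 1" j] z c_less \<open>p ! ?c < p ! z\<close> descent j_bounds by auto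
    qed
  qed
  moreover have "?e \<le> length ?q"
    using w nth_bounds[of w] del_prev.length_q prev_less by simp
  ultimately show ?thesis using peak_ins_rightI[OF contains c(1)] C_def by simp
qed

lemma peak_ins_del_descent:
  assumes descent: "p ! j < p ! (j - 1)"
  shows "p ! (j - 1) \<in> peak_ins (del_entry p (p ! (j - 1)))"
proof (cases "contains del_prev.q [3,2,1]")
  case False
  obtain w where "w < j - 1" "p ! (j - 1) < p ! w" using descent_witness descent .
  then have "p ! (j - 1) \<le> length del_prev.q"
    using nth_bounds[of w] del_prev.length_q prev_less by simp
  moreover have "2 \<le> p ! (j - 1)" using descent nth_bounds[of j] j_bounds by simp
  ultimately show ?thesis using peak_ins_321_freeI[OF False] by simp
next
  case True
  then have "last1pos del_prev.q < j" using del_prev.last1pos_q_less by simp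
  then consider "last1pos del_prev.q = j - 1" | "last1pos del_prev.q < j - 1" by linarith
  then show ?thesis
    using peak_ins_descent_at_prev peak_ins_descent_before_prev descent True by cases
qed

subsection \<open>Deleting p(j) when p(j-1) < p(j)\<close>

lemma avoider_del_ascent:
  assumes ascent: "p ! (j - 1) < p ! j"
  shows "avoider (del_entry p (p ! j))"
proof -
  obtain a b where "a < b" "b < j" "p!b < p!a" "p!j < p!b" by (rule obtain_321_ending_at_j)
  then show ?thesis using del_j.avoider_q[OF avoider, of a "j - 1"] ascent j_bounds by simp
qed

lemma stays_blue_ascent_321:
  assumes ascent: "p ! (j - 1) < p ! j" and "serves p [3,2,1] 2 t"
  shows "del_j.stays_blue t"
proof -
  obtain a b where ab: "a < b" "b < j" "p!b < p!a" "p!j < p!b" by (rule obtain_321_ending_at_j)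
  obtain a' c where 321: "a' < t" "t < c" "c < length p" "p!t < p!a'" "p!c < p!t"
    using assms(2) unfolding serves_321_two_iff by blast
  consider "a' = j" | "c = j" | "j \<notin> {a', c}" by blast
  then show ?thesis
  proof cases
    case 1
    with 321 ab show ?thesis
      unfolding del_j.stays_blue_def by (intro disjI1 exI[of _ a] exI[of _ c]) auto
  next
    case 2
    with 321 ascent have "t \<noteq> j - 1" by auto
    with 2 321 ascent j_bounds show ?thesis
      unfolding del_j.stays_blue_def by (intro disjI1 exI[of _ a'] exI[of _ "j - 1"]) auto
  next
    case 3
    with 321 show ?thesis
      unfolding del_j.stays_blue_def by (intro disjI1 exI[of _ a'] exI[of _ c]) auto
  qed
qed

lemma stays_blue_ascent_4312:
  assumes ascent: "p ! (j - 1) < p ! j" and "serves p [4,3,1,2] 2 t"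
  shows "del_j.stays_blue t"
proof -
  obtain a b where ab: "a < b" "b < j" "p!b < p!a" "p!j < p!b" by (rule obtain_321_ending_at_j)
  obtain a' b' c where 4312: "a' < b'" "b' < c" "c < t" "t < length p"
    "p!b' < p!a'" "p!t < p!b'" "p!c < p!t"
    using assms(2) unfolding serves_4312_two_iff by blast
  consider "c = j" | "b' = j" | "a' = j" | "j \<notin> {a', b', c}" by blast
  then show ?thesis
  proof cases
    case 1
    with 4312 ascent have "b' \<noteq> j - 1" by auto
    with 1 4312 ascent j_bounds show ?thesis
      unfolding del_j.stays_blue_def by (intro disjI2 exI[of _ a'] exI[of _ b'] exI[of _ "j - 1"]) auto
  next
    case 2
    with 4312 ab show ?thesis
      unfolding del_j.stays_blue_def by (intro disjI2 exI[of _ a] exI[of _ b] exI[of _ c]) auto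
  next
    case 3
    with 4312 ab show ?thesis
      unfolding del_j.stays_blue_def by (intro disjI2 exI[of _ a] exI[of _ b'] exI[of _ c]) auto
  next
    case 4
    with 4312 show ?thesis
      unfolding del_j.stays_blue_def by (intro disjI2 exI[of _ a'] exI[of _ b'] exI[of _ c]) auto
  qed
qed

lemma blue_del_ascent:
  assumes "p ! (j - 1) < p ! j"
  shows "lower_above (p ! j) ` (blue p - {p ! j}) = blue (del_entry p (p ! j))"
  using stays_blue_ascent_321[OF assms] stays_blue_ascent_4312[OF assms]
  by (intro del_j.blue_q) blast

lemma ascent_q_nth_before: "k < j \<Longrightarrow> del_j.q ! k = lower_above (p ! j) (p ! k)"
  using del_j.nth_q_pos_down[of k] j_bounds unfolding del_j.pos_down_def by simp

lemma ascent_q_less_iff: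
  "k < j \<Longrightarrow> k' < j \<Longrightarrow> del_j.q ! k < del_j.q ! k' \<longleftrightarrow> p ! k < p ! k'"
  using ascent_q_nth_before lower_above_less_iff del_j.nth_neq_y j_bounds by simp

lemma ascent_last1pos_q:
  assumes ascent: "p ! (j - 1) < p ! j"
  shows "contains del_j.q [3,2,1]" and "last1pos del_j.q = j - 1"
proof -
  let ?q = del_j.q
  obtain a b where ab: "a < b" "b < j" "p!b < p!a" "p!j < p!b" by (rule obtain_321_ending_at_j)
  have "b \<noteq> j - 1" using ab ascent by auto
  then have b: "b < j - 1" using ab by linarith
  have "?q ! b < ?q ! a" "?q ! (j - 1) < ?q ! b"
    using ab ascent ascent_q_less_iff[of b a] ascent_q_less_iff[of "j - 1" b] j_bounds by auto
  moreover have "j - 1 < length ?q" using del_j.length_q j_bounds by linarith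
  ultimately have "serves ?q [3,2,1] 1 (j - 1)"
    unfolding serves_321_one_iff using ab b by blast
  then show contains: "contains ?q [3,2,1]"
    unfolding contains_321_iff serves_321_one_iff by blast
  have "j - 1 \<le> last1pos ?q" using serves_le_last1pos \<open>serves ?q [3,2,1] 1 (j - 1)\<close> .
  moreover have "last1pos ?q < j" using del_j.last1pos_q_less[OF contains] by simp
  ultimately show "last1pos ?q = j - 1" by linarith
qed

lemma peak_ins_del_ascent:
  assumes ascent: "p ! (j - 1) < p ! j"
  shows "p ! j \<in> peak_ins (del_entry p (p ! j))"
proof -
  let ?q = del_j.q and ?e = "p ! (j - 1)"
  obtain a b where ab: "a < b" "b < j" "p!b < p!a" "p!j < p!b" by (rule obtain_321_ending_at_j)
  note contains = ascent_last1pos_q(1)[OF ascent] and last = ascent_last1pos_q(2)[OF ascent]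
  have q_prev: "?q ! (j - 1) = ?e"
    using ascent_q_nth_before[of "j - 1"] ascent j_bounds unfolding lower_above_def by simp
  define K where "K = {k. k < j - 1 \<and> ?e < ?q ! k}"
  have "b \<noteq> j - 1" using ab ascent by auto
  then have "b \<in> K"
    using ab ascent ascent_q_less_iff[of "j - 1" b] q_prev j_bounds unfolding K_def by auto
  moreover have "finite K" unfolding K_def by simp
  ultimately have "Max K \<in> K" "b \<le> Max K" using Max_in Max_ge by blast+
  then have x: "Max K < j - 1" "?e < ?q ! Max K" "b \<le> Max K" unfolding K_def by auto
  let ?x = "Max K"
  have "p ! j < p ! ?x"
  proof (rule ccontr)
    assume "\<not> p ! j < p ! ?x"
    moreover have "p ! ?x \<noteq> p ! j" using del_j.nth_neq_y x(1) j_bounds by simp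
    ultimately have below: "p ! ?x < p ! j" by simp
    then have "?e < p ! ?x"
      using x(2) ascent_q_nth_before[of ?x] x(1) unfolding lower_above_def by simp
    moreover have "b < ?x" using x(3) below ab by (cases "b = ?x") auto
    ultimately show False
      using no_4321[of a b ?x "j - 1"] ab x(1) below prev_less by auto
  qed
  then have "p ! j \<le> ?q ! ?x + 1"
    using ascent_q_nth_before[of ?x] x(1) unfolding lower_above_def by simp
  moreover have "?q ! last1pos ?q < p ! j" using last q_prev ascent by simp
  ultimately show ?thesis
    using peak_ins_leftI[OF contains] last q_prev unfolding K_def by simp
qed

end

theorem proposition6:
  fixes p :: "nat list" and y :: nat
  assumes "avoider p" and "contains p [3,2,1]" and "y = peak_blue p"
  shows "avoider (del_entry p y)
     \<and> (\<lambda>x. if y < x then x - 1 else x) ` (blue p - {y}) = blue (del_entry p y)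
     \<and> y \<in> peak_ins (del_entry p y)"
proof -
  interpret last_321 p using assms(1,2) by unfold_locales
  have relabel: "(\<lambda>x. if y < x then x - 1 else x) = lower_above y"
    unfolding lower_above_def ..
  have "y = max (p ! j) (p ! (j - 1))" using assms(3) unfolding peak_blue_def by simp
  then consider "p ! j < p ! (j - 1)" "y = p ! (j - 1)" | "p ! (j - 1) < p ! j" "y = p ! j"
    using nth_j_neq_prev by linarith
  then show ?thesis
  proof cases
    case 1
    then show ?thesis
      unfolding relabel using avoider_del_descent blue_del_descent peak_ins_del_descent by simp
  next
    case 2
    then show ?thesis
      unfolding relabel using avoider_del_ascent blue_del_ascent peak_ins_del_ascent by simp
  qed
qed

end
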